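(* Let $\alpha\in\mathrm{DC}_d$, $v_0\in C^\omega(\mathbb T^d,\mathbb R)$, and let $\lambda_0$ be small enough that the conclusion of the linear growth bound holds (i.e. for $\lambda\in(0,\lambda_0)$ there is $C'$ with $\|M_n(\alpha,\theta,E,0)\|\le C'|n|$ for all $E\in\Sigma_{\lambda,\alpha}$, $\theta$, $n\ne0$). Let $\lambda\in(0,\lambda_0)$ and let $g:\mathbb Z\to\mathbb R$ satisfy $\sum_{n\in\mathbb Z}|n||g(n)|<\infty$. Then there is a constant $C''$ (independent of $E$, $\theta$, $k$) such that for every $E\in\Sigma_{\lambda,\alpha}$, every $\theta\in\mathbb T^d$ and every $k\ge1$, \[\|\widetilde M_k(\alpha,\theta,E,0)\|\le C''k.\]
   Context: $\Sigma_{\lambda,\alpha}$ is the spectrum of $(H_{\lambda,\alpha,\theta}u)(n)=u(n+1)+u(n-1)+\lambda v_0(\theta+n\alpha)u(n)$. $M_k(\alpha,\theta,E,n)=A(n+k-1)\cdots A(n)$ with $A(j)=\begin{pmatrix}E-\lambda v_0(\theta+j\alpha)&-1\\1&0\end{pmatrix}$, and $\widetilde M_k$ is the analogous product with $A(j)$ replaced by $\begin{pmatrix}E-\lambda v_0(\theta+j\alpha)-g(j)&-1\\1&0\end{pmatrix}$. *)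

theory Defs
  imports "HOL-Analysis.Analysis"
begin

text \<open>Functions on the torus T^d are represented as 1-periodic functions on real^'d,
  with d = CARD('d).\<close>

definition periodic1 :: "(real^'d \<Rightarrow> real) \<Rightarrow> bool" where
  "periodic1 f \<longleftrightarrow> (\<forall>x i. f (x + axis i 1) = f x)"

definition real_analytic_on_vec :: "(real^'d \<Rightarrow> real) \<Rightarrow> bool" where
  "real_analytic_on_vec f \<longleftrightarrow>
     (\<forall>x. \<exists>r>0. \<exists>c :: ('d \<Rightarrow> nat) \<Rightarrow> real. \<forall>y \<in> ball x r.
        (\<lambda>m. \<bar>c m * (\<Prod>i\<in>UNIV. (y $ i - x $ i) ^ m i)\<bar>) summable_on UNIV \<and>
        ((\<lambda>m. c m * (\<Prod>i\<in>UNIV. (y $ i - x $ i) ^ m i)) has_sum f y) UNIV)"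

definition analytic_torus_fun :: "(real^'d \<Rightarrow> real) \<Rightarrow> bool" where
  "analytic_torus_fun f \<longleftrightarrow> periodic1 f \<and> real_analytic_on_vec f"

definition dist_Z :: "real \<Rightarrow> real" where
  "dist_Z x = \<bar>x - round x\<bar>"

definition DC :: "(real^'d) set" where
  "DC = {\<alpha>. \<exists>\<gamma>>0. \<exists>\<tau>>real CARD('d) - 1. \<forall>k :: int^'d. k \<noteq> 0 \<longrightarrow>
           dist_Z (\<Sum>i\<in>UNIV. of_int (k $ i) * \<alpha> $ i)
             \<ge> \<gamma> / (real_of_int (\<Sum>i\<in>UNIV. \<bar>k $ i\<bar>)) powr \<tau>}"

definition l2Z :: "(int \<Rightarrow> complex) set" where
  "l2Z = {u. (\<lambda>n. (cmod (u n))\<^sup>2) summable_on UNIV}"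

definition H_op :: "real \<Rightarrow> real^'d \<Rightarrow> (real^'d \<Rightarrow> real) \<Rightarrow> real^'d
                     \<Rightarrow> (int \<Rightarrow> complex) \<Rightarrow> int \<Rightarrow> complex" where
  "H_op lam \<alpha> v0 \<theta> u n = u (n + 1) + u (n - 1)
        + complex_of_real (lam * v0 (\<theta> + of_int n *\<^sub>R \<alpha>)) * u n"

text \<open>Spectrum of H_{lambda,alpha,theta} on l^2(Z): E such that H - E is not a bijection
  of l^2(Z) (H is bounded and self-adjoint, so the spectrum is real and bijectivity is
  equivalent to bounded invertibility).\<close>
definition spec_theta :: "real \<Rightarrow> real^'d \<Rightarrow> (real^'d \<Rightarrow> real) \<Rightarrow> real^'d \<Rightarrow> real set" where
  "spec_theta lam \<alpha> v0 \<theta> = {E. \<not> (\<forall>f\<in>l2Z. \<exists>!u. u \<in> l2Z \<and>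
        (\<lambda>n. H_op lam \<alpha> v0 \<theta> u n - complex_of_real E * u n) = f)}"

text \<open>Sigma_{lambda,alpha}; for rationally independent alpha it does not depend on theta,
  we take the union over theta.\<close>
definition Sigma :: "real \<Rightarrow> real^'d \<Rightarrow> (real^'d \<Rightarrow> real) \<Rightarrow> real set" where
  "Sigma lam \<alpha> v0 = (\<Union>\<theta>. spec_theta lam \<alpha> v0 \<theta>)"

definition Amat :: "real \<Rightarrow> real^'d \<Rightarrow> (real^'d \<Rightarrow> real) \<Rightarrow> (int \<Rightarrow> real)
                    \<Rightarrow> real^'d \<Rightarrow> real \<Rightarrow> int \<Rightarrow> real^2^2" where
  "Amat lam \<alpha> v0 g \<theta> E j =
     (\<chi> i l. if i = 1 then (if l = 1 then E - lam * v0 (\<theta> + of_int j *\<^sub>R \<alpha>) - g j else -1)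
            else (if l = 1 then 1 else 0))"

fun Mg :: "real \<Rightarrow> real^'d \<Rightarrow> (real^'d \<Rightarrow> real) \<Rightarrow> (int \<Rightarrow> real)
            \<Rightarrow> nat \<Rightarrow> real^'d \<Rightarrow> real \<Rightarrow> int \<Rightarrow> real^2^2" where
  "Mg lam \<alpha> v0 g 0 \<theta> E n = mat 1"
| "Mg lam \<alpha> v0 g (Suc k) \<theta> E n = Amat lam \<alpha> v0 g \<theta> E (n + int k) ** Mg lam \<alpha> v0 g k \<theta> E n"

definition M :: "real \<Rightarrow> real^'d \<Rightarrow> (real^'d \<Rightarrow> real) \<Rightarrow> nat \<Rightarrow> real^'d \<Rightarrow> real \<Rightarrow> int \<Rightarrow> real^2^2" where
  "M lam \<alpha> v0 k \<theta> E n = Mg lam \<alpha> v0 (\<lambda>_. 0) k \<theta> E n"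

definition Mtilde :: "real \<Rightarrow> real^'d \<Rightarrow> (real^'d \<Rightarrow> real) \<Rightarrow> (int \<Rightarrow> real)
                       \<Rightarrow> nat \<Rightarrow> real^'d \<Rightarrow> real \<Rightarrow> int \<Rightarrow> real^2^2" where
  "Mtilde lam \<alpha> v0 g k \<theta> E n = Mg lam \<alpha> v0 g k \<theta> E n"

definition mnorm :: "real^2^2 \<Rightarrow> real" where
  "mnorm A = onorm (\<lambda>x. A *v x)"

end

theory Submission
  imports Defs
begin

text \<open>
  Writing the perturbed one-step matrix as A(j) + D(j), where D(j) has the single entry -g(j),
  gives the Duhamel formula
  \<open>M\<^sup>~\<^sub>k = M\<^sub>k + \<Sum>\<^sub>j\<^sub><\<^sub>k M\<^sub>k\<^sub>-\<^sub>1\<^sub>-\<^sub>j(\<cdot>, j+1) D(j) M\<^sup>~\<^sub>j\<close>.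
  Since the linear bound on \<open>M\<^sub>n(\<theta>, E, 0)\<close> holds for every \<open>\<theta>\<close>, it also holds for
  \<open>M\<^sub>n(\<theta>, E, j)\<close>, so \<open>b\<^sub>k = \<parallel>M\<^sup>~\<^sub>k\<parallel> / max(k, 1)\<close> satisfies
  \<open>b\<^sub>k \<le> C + C \<Sum>\<^sub>j\<^sub><\<^sub>k j |g(j)| b\<^sub>j\<close>, and the discrete Gronwall inequality bounds \<open>b\<^sub>k\<close>
  by \<open>C exp(C \<Sum> |n| |g(n)|)\<close>.
  The Diophantine and analyticity hypotheses only serve to establish the linear bound, which
  is assumed here.
\<close>

lemma mnorm_nonneg: "0 \<le> mnorm A"
  unfolding mnorm_def by (rule onorm_pos_le) simp

lemma mnorm_mult: "mnorm (A ** B) \<le> mnorm A * mnorm B"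
proof -
  have "(\<lambda>x. (A ** B) *v x) = (\<lambda>x. A *v x) \<circ> (\<lambda>x. B *v x)"
    by (auto simp: matrix_vector_mul_assoc)
  then show ?thesis
    unfolding mnorm_def by (metis onorm_compose matrix_vector_mul_bounded_linear)
qed

lemma mnorm_add: "mnorm (A + B) \<le> mnorm A + mnorm B"
proof -
  have "(\<lambda>x. (A + B) *v x) = (\<lambda>x. A *v x + B *v x)"
    by (auto simp: matrix_vector_mult_add_rdistrib)
  then show ?thesis
    unfolding mnorm_def by (metis onorm_triangle matrix_vector_mul_bounded_linear)
qed

lemma mnorm_zero [simp]: "mnorm 0 = 0"
proof -
  have "(*v) (0::real^2^2) = (\<lambda>x. 0)" by auto
  then show ?thesis unfolding mnorm_def by (simp add: onorm_zero)
qed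

lemma mnorm_mat_1 [simp]: "mnorm (mat 1) = 1"
proof -
  have "(*v) (mat 1::real^2^2) = (\<lambda>x. x)" by auto
  then show ?thesis unfolding mnorm_def by (simp add: onorm_id)
qed

lemma mnorm_sum: "finite S \<Longrightarrow> mnorm (sum f S) \<le> (\<Sum>j\<in>S. mnorm (f j))"
proof (induction S rule: finite_induct)
  case (insert x F)
  then show ?case using mnorm_add[of "f x" "sum f F"] by simp
qed simp

lemma mnorm_mult3_le:
  assumes "mnorm A \<le> a" and "mnorm D \<le> d"
  shows "mnorm (A ** D ** X) \<le> a * d * mnorm X"
proof -
  have "mnorm (A ** D ** X) \<le> mnorm A * mnorm D * mnorm X"
    by (meson mnorm_mult mnorm_nonneg mult_right_mono order_trans)
  also have "\<dots> \<le> a * d * mnorm X"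
    using assms by (intro mult_right_mono mult_mono mnorm_nonneg) (auto intro: order_trans[OF mnorm_nonneg])
  finally show ?thesis .
qed

lemma matrix_add_rdistrib: "((A::'a::semiring_1^'n^'m) + B) ** C = A ** C + B ** C"
  by (simp add: matrix_matrix_mult_def vec_eq_iff sum.distrib algebra_simps)

lemma matrix_mul_sum_right:
  "finite S \<Longrightarrow> (A::'a::semiring_1^'n^'m) ** sum f S = (\<Sum>j\<in>S. A ** f j)"
  by (induction S rule: finite_induct) (auto simp: matrix_add_ldistrib)

definition perturbation_mat :: "(int \<Rightarrow> real) \<Rightarrow> int \<Rightarrow> real^2^2" where
  "perturbation_mat g j = (\<chi> i l. if i = 1 \<and> l = 1 then - g j else 0)"

lemma Amat_eq_unperturbed_plus_perturbation:
  "Amat lam \<alpha> v0 g \<theta> E j = Amat lam \<alpha> v0 (\<lambda>_. 0) \<theta> E j + perturbation_mat g j"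
  by (simp add: vec_eq_iff Amat_def perturbation_mat_def)

lemma mnorm_perturbation_mat_le: "mnorm (perturbation_mat g j) \<le> \<bar>g j\<bar>"
  unfolding mnorm_def
proof (rule onorm_le)
  fix x :: "real^2"
  have "perturbation_mat g j *v x = (- g j * x$1) *\<^sub>R axis 1 1"
    by (simp add: vec_eq_iff perturbation_mat_def matrix_vector_mult_def axis_def UNIV_2)
  then have "norm (perturbation_mat g j *v x) = \<bar>g j\<bar> * \<bar>x$1\<bar>"
    by (simp add: abs_mult)
  also have "\<dots> \<le> \<bar>g j\<bar> * norm x"
    by (intro mult_left_mono component_le_norm_cart) auto
  finally show "norm (perturbation_mat g j *v x) \<le> \<bar>g j\<bar> * norm x" .
qed

lemma M_Suc:
  "M lam \<alpha> v0 (Suc m) \<theta> E n = Amat lam \<alpha> v0 (\<lambda>_. 0) \<theta> E (n + int m) ** M lam \<alpha> v0 m \<theta> E n"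
  unfolding M_def by simp

lemma M_shift: "M lam \<alpha> v0 m \<theta> E n = M lam \<alpha> v0 m (\<theta> + of_int n *\<^sub>R \<alpha>) E 0"
proof (induction m)
  case (Suc m)
  have shift: "\<theta> + of_int (n + int m) *\<^sub>R \<alpha> = (\<theta> + of_int n *\<^sub>R \<alpha>) + of_int (0 + int m) *\<^sub>R \<alpha>"
    by (simp add: scaleR_add_left)
  have "Amat lam \<alpha> v0 (\<lambda>_. 0) \<theta> E (n + int m)
      = Amat lam \<alpha> v0 (\<lambda>_. 0) (\<theta> + of_int n *\<^sub>R \<alpha>) E (0 + int m)"
    unfolding Amat_def shift ..
  with Suc show ?case by (simp add: M_Suc)
qed (simp add: M_def)

lemma Mg_duhamel:
  "Mg lam \<alpha> v0 g k \<theta> E 0 = M lam \<alpha> v0 k \<theta> E 0 +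
     (\<Sum>j<k. M lam \<alpha> v0 (k - 1 - j) \<theta> E (int (j + 1)) ** perturbation_mat g (int j)
              ** Mg lam \<alpha> v0 g j \<theta> E 0)"
proof (induction k)
  case 0
  then show ?case by (simp add: M_def)
next
  case (Suc k)
  let ?A = "Amat lam \<alpha> v0 (\<lambda>_. 0) \<theta> E (int k)"
  let ?D = "perturbation_mat g (int k)"
  let ?Mg = "Mg lam \<alpha> v0 g k \<theta> E 0"
  let ?T = "\<lambda>k j. M lam \<alpha> v0 (k - 1 - j) \<theta> E (int (j + 1)) ** perturbation_mat g (int j)
                   ** Mg lam \<alpha> v0 g j \<theta> E 0"
  have step: "?A ** ?T k j = ?T (Suc k) j" if "j < k" for j
  proof -
    have len: "Suc k - 1 - j = Suc (k - 1 - j)" and start: "int (j + 1) + int (k - 1 - j) = int k"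
      using that by simp_all
    show ?thesis unfolding len M_Suc start by (simp add: matrix_mul_assoc)
  qed
  have "Mg lam \<alpha> v0 g (Suc k) \<theta> E 0 = ?A ** ?Mg + ?D ** ?Mg"
    by (simp add: Amat_eq_unperturbed_plus_perturbation[of _ _ _ g] matrix_add_rdistrib)
  also have "?A ** ?Mg = ?A ** M lam \<alpha> v0 k \<theta> E 0 + (\<Sum>j<k. ?A ** ?T k j)"
    by (subst Suc) (simp only: matrix_add_ldistrib matrix_mul_sum_right[OF finite_lessThan])
  also have "(\<Sum>j<k. ?A ** ?T k j) = (\<Sum>j<k. ?T (Suc k) j)"
    by (rule sum.cong[OF refl]) (rule step, simp)
  also have "?A ** M lam \<alpha> v0 k \<theta> E 0 = M lam \<alpha> v0 (Suc k) \<theta> E 0"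
    by (simp add: M_Suc)
  also have "?D ** ?Mg = ?T (Suc k) k"
    by (simp add: M_def)
  finally show ?case by (simp add: add.assoc)
qed

text \<open>The extremal solution of the Gronwall inequality turns it into an equality.\<close>

lemma gronwall_product_eq:
  fixes w :: "nat \<Rightarrow> real"
  shows "c * (\<Prod>j<k. 1 + c * w j) = c + c * (\<Sum>j<k. w j * (c * (\<Prod>i<j. 1 + c * w i)))"
  by (induction k) (simp_all add: algebra_simps)

lemma discrete_gronwall:
  fixes b w :: "nat \<Rightarrow> real"
  assumes c: "c \<ge> 0" and w: "\<And>j. w j \<ge> 0"
    and b: "\<And>k. b k \<le> c + c * (\<Sum>j<k. w j * b j)"
  shows "b k \<le> c * (\<Prod>j<k. 1 + c * w j)"
proof (induction k rule: less_induct)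
  case (less k)
  have "b k \<le> c + c * (\<Sum>j<k. w j * b j)" by (rule b)
  also have "\<dots> \<le> c + c * (\<Sum>j<k. w j * (c * (\<Prod>i<j. 1 + c * w i)))"
    using less w by (intro add_left_mono mult_left_mono c sum_mono) auto
  also have "\<dots> = c * (\<Prod>j<k. 1 + c * w j)"
    by (rule gronwall_product_eq[symmetric])
  finally show ?case .
qed

lemma discrete_gronwall_exp:
  fixes b w :: "nat \<Rightarrow> real"
  assumes c: "c \<ge> 0" and w: "\<And>j. w j \<ge> 0" and W: "\<And>k. (\<Sum>j<k. w j) \<le> W"
    and b: "\<And>k. b k \<le> c + c * (\<Sum>j<k. w j * b j)"
  shows "b k \<le> c * exp (c * W)"
proof -
  have "b k \<le> c * (\<Prod>j<k. 1 + c * w j)"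
    by (rule discrete_gronwall[OF c w b])
  also have "(\<Prod>j<k. 1 + c * w j) \<le> exp (\<Sum>j<k. c * w j)"
    using c w by (intro prod_le_exp_sum) simp
  also have "\<dots> \<le> exp (c * W)"
    using W c by (simp add: sum_distrib_left[symmetric] mult_left_mono)
  finally show ?thesis using c by (simp add: mult_left_mono)
qed

lemma weighted_partial_sum_le:
  fixes g :: "int \<Rightarrow> real"
  assumes "(\<lambda>n. \<bar>real_of_int n\<bar> * \<bar>g n\<bar>) summable_on UNIV"
  shows "(\<Sum>j<k. \<bar>g (int j)\<bar> * real (max j 1))
           \<le> \<bar>g 0\<bar> + (\<Sum>\<^sub>\<infinity>n. \<bar>real_of_int n\<bar> * \<bar>g n\<bar>)"
proof -
  have "(\<Sum>j<k. \<bar>g (int j)\<bar> * real (max j 1))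
          \<le> \<bar>g 0\<bar> + (\<Sum>j<k. \<bar>real_of_int (int j)\<bar> * \<bar>g (int j)\<bar>)"
  proof (induction k)
    case (Suc k)
    have "\<bar>g (int k)\<bar> * real (max k 1) \<le> \<bar>g 0\<bar> * of_bool (k = 0) + \<bar>real_of_int (int k)\<bar> * \<bar>g (int k)\<bar>"
      by (cases k) simp_all
    with Suc show ?case by (cases "k = 0") simp_all
  qed simp
  also have "(\<Sum>j<k. \<bar>real_of_int (int j)\<bar> * \<bar>g (int j)\<bar>)
      = (\<Sum>n\<in>int ` {..<k}. \<bar>real_of_int n\<bar> * \<bar>g n\<bar>)"
    by (simp add: sum.reindex)
  also have "\<dots> \<le> (\<Sum>\<^sub>\<infinity>n. \<bar>real_of_int n\<bar> * \<bar>g n\<bar>)"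
    by (rule finite_sum_le_infsum[OF assms]) auto
  finally show ?thesis by simp
qed

text \<open>The normalisation \<open>max m 1\<close> accounts for the identity matrix at \<open>m = 0\<close>.\<close>

lemma mnorm_Mg_le_linear:
  assumes C: "C \<ge> 1"
    and M_le: "\<And>m n. mnorm (M lam \<alpha> v0 m \<theta> E n) \<le> C * real (max m 1)"
    and W: "\<And>k. (\<Sum>j<k. \<bar>g (int j)\<bar> * real (max j 1)) \<le> W"
  shows "mnorm (Mg lam \<alpha> v0 g k \<theta> E 0) \<le> C * exp (C * W) * real (max k 1)"
proof -
  define N where "N j = mnorm (Mg lam \<alpha> v0 g j \<theta> E 0)" for j
  define b where "b j = N j / real (max j 1)" for j
  define w where "w j = \<bar>g (int j)\<bar> * real (max j 1)" for j
  have N_eq: "N j = real (max j 1) * b j" for j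
    unfolding b_def by (simp add: max_def)
  have "b m \<le> C + C * (\<Sum>j<m. w j * b j)" for m
  proof (cases "m = 0")
    case True
    then show ?thesis using C by (simp add: b_def N_def)
  next
    case False
    then have m: "max m 1 = m" "real m > 0" by simp_all
    let ?T = "\<lambda>j. M lam \<alpha> v0 (m - 1 - j) \<theta> E (int (j + 1)) ** perturbation_mat g (int j)
                  ** Mg lam \<alpha> v0 g j \<theta> E 0"
    have T_le: "mnorm (?T j) \<le> C * real m * \<bar>g (int j)\<bar> * N j" for j
    proof -
      have "C * real (max (m - 1 - j) 1) \<le> C * real m"
        using C m by (intro mult_left_mono) auto
      then have "mnorm (M lam \<alpha> v0 (m - 1 - j) \<theta> E (int (j + 1))) \<le> C * real m"
        using M_le order_trans by blast
      then show ?thesis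
        unfolding N_def by (rule mnorm_mult3_le) (rule mnorm_perturbation_mat_le)
    qed
    have "N m \<le> mnorm (M lam \<alpha> v0 m \<theta> E 0) + mnorm (\<Sum>j<m. ?T j)"
      unfolding N_def Mg_duhamel[of lam \<alpha> v0 g m] by (rule mnorm_add)
    also have "\<dots> \<le> C * real m + (\<Sum>j<m. mnorm (?T j))"
      using M_le[of m 0] m by (intro add_mono mnorm_sum) simp_all
    also have "\<dots> \<le> C * real m + (\<Sum>j<m. C * real m * \<bar>g (int j)\<bar> * N j)"
      by (intro add_left_mono sum_mono T_le)
    also have "\<dots> = real m * (C + C * (\<Sum>j<m. w j * b j))"
      by (simp add: sum_distrib_left N_eq w_def algebra_simps)
    finally show ?thesis
      using m by (simp add: b_def pos_divide_le_eq mult.commute)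
  qed
  then have "b k \<le> C * exp (C * W)"
    using C W by (intro discrete_gronwall_exp[of C w]) (simp_all add: w_def)
  then have "real (max k 1) * b k \<le> real (max k 1) * (C * exp (C * W))"
    by (rule mult_left_mono) simp
  then show ?thesis
    by (simp add: N_def[symmetric] N_eq mult.commute)
qed

theorem lemma5p2:
  fixes \<alpha> :: "real^'d" and v0 :: "real^'d \<Rightarrow> real" and lam0 lam :: real
    and g :: "int \<Rightarrow> real"
  assumes "\<alpha> \<in> DC"
    and "analytic_torus_fun v0"
    and "\<forall>lam'. 0 < lam' \<and> lam' < lam0 \<longrightarrow> (\<exists>C'. \<forall>E \<in> Sigma lam' \<alpha> v0. \<forall>\<theta>. \<forall>n::nat. n \<ge> 1 \<longrightarrow>
              mnorm (M lam' \<alpha> v0 n \<theta> E 0) \<le> C' * real n)"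
    and "0 < lam" and "lam < lam0"
    and "(\<lambda>n. \<bar>real_of_int n\<bar> * \<bar>g n\<bar>) summable_on UNIV"
  shows "\<exists>C''. \<forall>E \<in> Sigma lam \<alpha> v0. \<forall>\<theta>. \<forall>k::nat. k \<ge> 1 \<longrightarrow>
           mnorm (Mtilde lam \<alpha> v0 g k \<theta> E 0) \<le> C'' * real k"
proof -
  obtain C' where C': "\<forall>E \<in> Sigma lam \<alpha> v0. \<forall>\<theta>. \<forall>n::nat. n \<ge> 1 \<longrightarrow>
      mnorm (M lam \<alpha> v0 n \<theta> E 0) \<le> C' * real n"
    using assms(3-5) by blast
  define C where "C = max C' 1"
  have "C \<ge> 1" by (simp add: C_def)
  define W where "W = \<bar>g 0\<bar> + (\<Sum>\<^sub>\<infinity>n. \<bar>real_of_int n\<bar> * \<bar>g n\<bar>)"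
  have M_le: "mnorm (M lam \<alpha> v0 m \<theta> E n) \<le> C * real (max m 1)"
    if "E \<in> Sigma lam \<alpha> v0" for E \<theta> m n
  proof (cases "m = 0")
    case False
    then have "mnorm (M lam \<alpha> v0 m \<theta> E n) \<le> C' * real m"
      using C' that by (simp add: M_shift[of _ _ _ _ \<theta> _ n])
    also have "\<dots> \<le> C * real (max m 1)"
      using False by (simp add: C_def mult_right_mono)
    finally show ?thesis .
  qed (simp add: M_def C_def)
  have "mnorm (Mtilde lam \<alpha> v0 g k \<theta> E 0) \<le> C * exp (C * W) * real k"
    if "E \<in> Sigma lam \<alpha> v0" and "k \<ge> 1" for E \<theta> k
  proof -
    have "max k 1 = k" using that(2) by simp
    then show ?thesis
      unfolding Mtilde_def W_def
      by (metis mnorm_Mg_le_linear[OF \<open>C \<ge> 1\<close> M_le[OF that(1)] weighted_partial_sum_le[OF assms(6)]])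
  qed
  then show ?thesis by blast
qed

end
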